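(* Let $\Sigma\subset\mathbb{R}^d$ be an open set with coordinates $\xi^a$, $M\subset\mathbb{R}^D$ open with coordinates $X^\mu$, $V$ a smooth volume metric on $M$, and $X:\Sigma\to M$ a smooth map with $\gamma_v>0$ on $\Sigma$. Let $F$ be a $C^2$ function on $(0,\infty)$. If $X$ satisfies the Euler–Lagrange equations of the action $S=\int_\Sigma d^d\xi\,F(\gamma_v)$, i.e. $$\frac{\partial F(\gamma_v)}{\partial X^\alpha}-\partial_a\frac{\partial F(\gamma_v)}{\partial(\partial_aX^\alpha)}=0\quad(\alpha=1,\dots,D),$$ then for every $b=1,\dots,d$, $$\left(\partial_b\gamma_v\right)\left(2\gamma_v\,F''(\gamma_v)+F'(\gamma_v)\right)=0\quad\text{on }\Sigma.$$
   Context: A volume metric (of degree $d$) on $M$ is a smooth field of components $V_{[\mu_1\cdots\mu_d][\nu_1\cdots\nu_d]}(X)$ that is totally antisymmetric within each of the two $d$-tuples of indices and symmetric under exchange of the two $d$-tuples. Given $X:\Sigma\to M$, define $\sigma^{\mu_1\cdots\mu_d}=\epsilon^{a_1\cdots a_d}\partial_{a_1}X^{\mu_1}\cdots\partial_{a_d}X^{\mu_d}$ (with $\epsilon$ the $d$-dimensional Levi-Civita symbol) and $\gamma_v=V_{[\mu_1\cdots\mu_d][\nu_1\cdots\nu_d]}(X)\,\sigma^{\mu_1\cdots\mu_d}\sigma^{\nu_1\cdots\nu_d}$. Special cases: for a Riemannian metric $g$, $V=\frac{1}{d!}g_{\mu_1\nu_1}\cdots g_{\mu_d\nu_d}$ gives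 $\gamma_v=\det(g_{\mu\nu}\partial_aX^\mu\partial_bX^\nu)$; for $d=2$ and an areal metric $G_{\mu\nu\rho\lambda}$, $V=\frac14G$ gives $\gamma_v=\frac14G_{\mu\nu\rho\lambda}\sigma^{\mu\nu}\sigma^{\rho\lambda}$. *)

theory Defs
  imports "HOL-Analysis.Analysis" "HOL-Combinatorics.Permutations"
begin

definition dirderiv :: "('a::real_normed_vector \<Rightarrow> real) \<Rightarrow> 'a \<Rightarrow> 'a \<Rightarrow> real" where
  "dirderiv f x v = deriv (\<lambda>t. f (x + t *\<^sub>R v)) 0"

definition partial :: "(real^'n \<Rightarrow> real) \<Rightarrow> real^'n \<Rightarrow> 'n \<Rightarrow> real" where
  "partial f x i = dirderiv f x (axis i 1)"

fun Ck_on :: "nat \<Rightarrow> (real^'n) set \<Rightarrow> (real^'n \<Rightarrow> real) \<Rightarrow> bool" where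
  "Ck_on 0 S f = continuous_on S f"
| "Ck_on (Suc k) S f = (f differentiable_on S \<and> (\<forall>i. Ck_on k S (\<lambda>x. partial f x i)))"

definition smooth_on :: "(real^'n) set \<Rightarrow> (real^'n \<Rightarrow> real) \<Rightarrow> bool" where
  "smooth_on S f = (\<forall>k. Ck_on k S f)"

definition levi_civita :: "('d::finite \<Rightarrow> 'd) \<Rightarrow> real" where
  "levi_civita a = (if a permutes (UNIV :: 'd set) then real_of_int (sign a) else 0)"

text \<open>Volume metric of degree d = CARD('d) on M: components V x m n, with m, n d-tuples of
  target indices; smooth, totally antisymmetric in each tuple, symmetric under exchange.\<close>
definition volume_metric :: "(real^'D) set \<Rightarrow> (real^'D \<Rightarrow> ('d::finite \<Rightarrow> 'D::finite) \<Rightarrow> ('d \<Rightarrow> 'D) \<Rightarrow> real) \<Rightarrow> bool" where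
  "volume_metric M V =
     ((\<forall>m n. smooth_on M (\<lambda>x. V x m n))
    \<and> (\<forall>x\<in>M. \<forall>m n p. p permutes (UNIV :: 'd set) \<longrightarrow>
          V x (m \<circ> p) n = real_of_int (sign p) * V x m n
        \<and> V x m (n \<circ> p) = real_of_int (sign p) * V x m n)
    \<and> (\<forall>x\<in>M. \<forall>m n. V x m n = V x n m))"

text \<open>sigma^{mu_1...mu_d} built from the matrix P, where P $ mu $ a stands for d_a X^mu.\<close>
definition sigma_pt :: "real^'d^'D \<Rightarrow> ('d::finite \<Rightarrow> 'D::finite) \<Rightarrow> real" where
  "sigma_pt P m = (\<Sum>a\<in>(UNIV :: ('d \<Rightarrow> 'd) set). levi_civita a * (\<Prod>i\<in>UNIV. P $ (m i) $ (a i)))"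

definition gamma_pt :: "(real^'D \<Rightarrow> ('d::finite \<Rightarrow> 'D::finite) \<Rightarrow> ('d \<Rightarrow> 'D) \<Rightarrow> real)
     \<Rightarrow> real^'D \<Rightarrow> real^'d^'D \<Rightarrow> real" where
  "gamma_pt V x P = (\<Sum>m\<in>UNIV. \<Sum>n\<in>UNIV. V x m n * sigma_pt P m * sigma_pt P n)"

definition jac :: "(real^'d \<Rightarrow> real^'D) \<Rightarrow> real^'d \<Rightarrow> real^'d^'D" where
  "jac X \<xi> = (\<chi> \<mu>. \<chi> a. partial (\<lambda>\<eta>. X \<eta> $ \<mu>) \<xi> a)"

definition gamma_v :: "(real^'D \<Rightarrow> ('d::finite \<Rightarrow> 'D::finite) \<Rightarrow> ('d \<Rightarrow> 'D) \<Rightarrow> real)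
     \<Rightarrow> (real^'d \<Rightarrow> real^'D) \<Rightarrow> real^'d \<Rightarrow> real" where
  "gamma_v V X \<xi> = gamma_pt V (X \<xi>) (jac X \<xi>)"

definition lagr :: "(real^'D \<Rightarrow> ('d::finite \<Rightarrow> 'D::finite) \<Rightarrow> ('d \<Rightarrow> 'D) \<Rightarrow> real)
     \<Rightarrow> (real \<Rightarrow> real) \<Rightarrow> real^'D \<Rightarrow> real^'d^'D \<Rightarrow> real" where
  "lagr V F x P = F (gamma_pt V x P)"

text \<open>Euler-Lagrange equations of S = int F(gamma_v):
  dL/dX^alpha - d_a (dL/d(d_a X^alpha)) = 0 on Sigma, for every alpha.\<close>
definition euler_lagrange :: "(real^'d) set \<Rightarrow> (real^'D \<Rightarrow> ('d::finite \<Rightarrow> 'D::finite) \<Rightarrow> ('d \<Rightarrow> 'D) \<Rightarrow> real)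
     \<Rightarrow> (real \<Rightarrow> real) \<Rightarrow> (real^'d \<Rightarrow> real^'D) \<Rightarrow> bool" where
  "euler_lagrange Sig V F X =
    (\<forall>\<xi>\<in>Sig. \<forall>\<alpha>.
       dirderiv (\<lambda>x. lagr V F x (jac X \<xi>)) (X \<xi>) (axis \<alpha> 1)
       - (\<Sum>a\<in>UNIV. partial (\<lambda>\<eta>. dirderiv (\<lambda>P. lagr V F (X \<eta>) P) (jac X \<eta>) (axis \<alpha> (axis a 1))) \<xi> a)
       = 0)"

end

theory Submission
  imports Defs
begin

(* The density gamma_v is a quadratic form in the minors of the Jacobian P = (d_a X^mu), so
   replacing P by P A multiplies it by (det A)^2. Differentiating at A = 1 in the direction of
   the matrix unit E_ba gives the Euler identity
     sum_alpha (d gamma / d P^alpha_a) P^alpha_b = 2 gamma delta_ab.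
   Contract the Euler-Lagrange equations with d_b X^alpha. The term d F/d X^alpha combines with the
   chain rule for d_b gamma; in the divergence term, F'' d_a gamma multiplies the Euler identity and
   F' multiplies its d_a-derivative. The remaining second derivatives d_a d_b X^alpha appear on both
   sides and cancel by the symmetry of second derivatives, leaving (2 gamma F'' + F') d_b gamma = 0:
   this is the Noether identity of reparametrisation invariance. *)

section \<open>Directional derivatives\<close>

lemma has_derivative_imp_dirderiv:
  assumes "(f has_derivative f') (at x)"
  shows "dirderiv f x v = f' v"
proof -
  have "((\<lambda>t. x + t *\<^sub>R v) has_derivative (\<lambda>t. t *\<^sub>R v)) (at 0)"
    by (auto intro!: derivative_eq_intros)
  from has_derivative_compose[OF this, of f f'] assms
  have "((\<lambda>t. f (x + t *\<^sub>R v)) has_derivative (\<lambda>t. t * f' v)) (at 0)"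
    by (simp add: linear_scale[OF has_derivative_linear[OF assms]])
  then show ?thesis
    unfolding dirderiv_def
    by (intro DERIV_imp_deriv) (simp add: has_field_derivative_def mult_commute_abs)
qed

lemma has_derivative_dirderiv:
  assumes "f differentiable (at x)"
  shows "(f has_derivative dirderiv f x) (at x)"
proof -
  obtain f' where f': "(f has_derivative f') (at x)"
    using assms differentiable_def by blast
  moreover have "dirderiv f x = f'"
    using has_derivative_imp_dirderiv[OF f'] by blast
  ultimately show ?thesis by simp
qed

lemma linear_dirderiv: "f differentiable (at x) \<Longrightarrow> linear (dirderiv f x)"
  using has_derivative_dirderiv has_derivative_linear by blast

lemma has_real_derivative_dirderiv_line:
  assumes "f differentiable (at (x + s *\<^sub>R v))"
  shows "((\<lambda>s. f (x + s *\<^sub>R v)) has_real_derivative dirderiv f (x + s *\<^sub>R v) v) (at s)"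
proof -
  have "((\<lambda>t. x + t *\<^sub>R v) has_derivative (\<lambda>t. t *\<^sub>R v)) (at s)"
    by (auto intro!: derivative_eq_intros)
  from has_derivative_compose[OF this has_derivative_dirderiv[OF assms]]
  show ?thesis
    by (simp add: has_field_derivative_def linear_scale[OF linear_dirderiv[OF assms]]
        mult_commute_abs)
qed

lemma dirderiv_cong_open:
  assumes "open S" "x \<in> S" "\<And>y. y \<in> S \<Longrightarrow> f y = g y"
  shows "dirderiv f x v = dirderiv g x v"
proof -
  have "open ((\<lambda>t::real. x + t *\<^sub>R v) -` S)"
    by (rule continuous_open_vimage[OF assms(1)]) (auto intro!: continuous_intros)
  then have "\<forall>\<^sub>F t in nhds 0. f (x + t *\<^sub>R v) = g (x + t *\<^sub>R v)"
    unfolding eventually_nhds using assms(2,3) by (intro exI[of _ "(\<lambda>t. x + t *\<^sub>R v) -` S"]) auto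
  then show ?thesis unfolding dirderiv_def by (intro deriv_cong_ev) auto
qed

lemma dirderiv_mult:
  assumes "f differentiable (at x)" "g differentiable (at x)"
  shows "dirderiv (\<lambda>y. f y * g y) x v = dirderiv f x v * g x + f x * dirderiv g x v"
  using has_derivative_imp_dirderiv[OF has_derivative_mult[OF has_derivative_dirderiv[OF assms(1)]
        has_derivative_dirderiv[OF assms(2)]]]
  by (simp add: mult.commute)

lemma dirderiv_compose_DERIV:
  assumes "DERIV F (f x) :> F'" "f differentiable (at x)"
  shows "dirderiv (\<lambda>y. F (f y)) x v = F' * dirderiv f x v"
  using has_derivative_imp_dirderiv[OF
      DERIV_compose_FDERIV[OF assms(1) has_derivative_dirderiv[OF assms(2)]]]
  by (simp add: mult.commute)

lemma dirderiv_sum: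
  assumes "finite I" "\<And>i. i \<in> I \<Longrightarrow> f i differentiable (at x)"
  shows "dirderiv (\<lambda>y. \<Sum>i\<in>I. f i y) x v = (\<Sum>i\<in>I. dirderiv (f i) x v)"
  using has_derivative_sum[OF has_derivative_dirderiv[OF assms(2)]] by (rule has_derivative_imp_dirderiv)

section \<open>Symmetry of second derivatives\<close>

lemma mixed_difference_mvt:
  fixes f :: "'a::real_normed_vector \<Rightarrow> real"
  assumes "h > 0"
    and rect: "\<And>s t. s \<in> {0..h} \<Longrightarrow> t \<in> {0..h} \<Longrightarrow> p + s *\<^sub>R u + t *\<^sub>R v \<in> S"
    and diff_f: "\<And>y. y \<in> S \<Longrightarrow> f differentiable (at y)"
    and diff_fu: "\<And>y. y \<in> S \<Longrightarrow> (\<lambda>y. dirderiv f y u) differentiable (at y)"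
  shows "\<exists>s\<in>{0<..<h}. \<exists>t\<in>{0<..<h}.
     f (p + h *\<^sub>R u + h *\<^sub>R v) - f (p + h *\<^sub>R u) - f (p + h *\<^sub>R v) + f p
       = h * h * dirderiv (\<lambda>y. dirderiv f y u) (p + s *\<^sub>R u + t *\<^sub>R v) v"
proof -
  define g where "g = (\<lambda>y. dirderiv f y u)"
  define A where "A = (\<lambda>s. f ((p + h *\<^sub>R v) + s *\<^sub>R u) - f (p + s *\<^sub>R u))"
  have "DERIV A s :> g ((p + h *\<^sub>R v) + s *\<^sub>R u) - g (p + s *\<^sub>R u)" if "0 \<le> s" "s \<le> h" for s
  proof -
    have "(p + h *\<^sub>R v) + s *\<^sub>R u \<in> S" "p + s *\<^sub>R u \<in> S"
      using rect[of s h] rect[of s 0] that \<open>h > 0\<close> by (simp_all add: add_ac)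
    then show ?thesis
      unfolding A_def g_def by (intro derivative_intros has_real_derivative_dirderiv_line diff_f)
  qed
  from MVT2[OF \<open>h > 0\<close> this]
  obtain s where s: "0 < s" "s < h"
    and A: "A h - A 0 = h * (g ((p + h *\<^sub>R v) + s *\<^sub>R u) - g (p + s *\<^sub>R u))"
    by auto
  define B where "B = (\<lambda>t. g ((p + s *\<^sub>R u) + t *\<^sub>R v))"
  have "DERIV B t :> dirderiv g ((p + s *\<^sub>R u) + t *\<^sub>R v) v" if "0 \<le> t" "t \<le> h" for t
    using rect[of s t] that s unfolding B_def g_def
    by (intro has_real_derivative_dirderiv_line diff_fu) simp
  from MVT2[OF \<open>h > 0\<close> this]
  obtain t where t: "0 < t" "t < h" and B: "B h - B 0 = h * dirderiv g ((p + s *\<^sub>R u) + t *\<^sub>R v) v"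
    by auto
  have "f (p + h *\<^sub>R u + h *\<^sub>R v) - f (p + h *\<^sub>R u) - f (p + h *\<^sub>R v) + f p = A h - A 0"
    unfolding A_def by (simp add: add_ac)
  also have "\<dots> = h * (B h - B 0)"
    unfolding A B_def by (simp add: add_ac)
  also have "\<dots> = h * h * dirderiv g (p + s *\<^sub>R u + t *\<^sub>R v) v"
    unfolding B by simp
  finally show ?thesis
    using s t unfolding g_def by (intro bexI[of _ s] bexI[of _ t]) auto
qed

lemma mixed_dirderivs_meet_near:
  fixes f :: "'a::real_normed_vector \<Rightarrow> real"
  assumes "open S" "p \<in> S" "d > 0"
    and diff_f: "\<And>y. y \<in> S \<Longrightarrow> f differentiable (at y)"
    and diff_fu: "\<And>y. y \<in> S \<Longrightarrow> (\<lambda>y. dirderiv f y u) differentiable (at y)"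
    and diff_fv: "\<And>y. y \<in> S \<Longrightarrow> (\<lambda>y. dirderiv f y v) differentiable (at y)"
  shows "\<exists>q1 q2. dist q1 p < d \<and> dist q2 p < d \<and>
           dirderiv (\<lambda>y. dirderiv f y u) q1 v = dirderiv (\<lambda>y. dirderiv f y v) q2 u"
proof -
  obtain r where "r > 0" "ball p r \<subseteq> S"
    using assms(1,2) open_contains_ball by blast
  define h where "h = min r d / (norm u + norm v + 1)"
  have "h > 0"
    using \<open>r > 0\<close> \<open>d > 0\<close> by (simp add: h_def add_nonneg_pos)
  have near: "dist (p + s *\<^sub>R w + t *\<^sub>R z) p < min r d"
    if "s \<in> {0..h}" "t \<in> {0..h}" "norm w + norm z = norm u + norm v" for s t w z
  proof -
    have "dist (p + s *\<^sub>R w + t *\<^sub>R z) p \<le> s * norm w + t * norm z"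
      using that norm_triangle_ineq[of "s *\<^sub>R w" "t *\<^sub>R z"] by (simp add: dist_norm add.assoc)
    also have "\<dots> \<le> h * (norm u + norm v)"
      using that by (simp flip: that(3) add: distrib_left mult_right_mono add_mono)
    also have "\<dots> = min r d * ((norm u + norm v) / (norm u + norm v + 1))"
      by (simp add: h_def)
    also have "\<dots> < min r d"
    proof -
      have "(norm u + norm v) / (norm u + norm v + 1) < 1"
        by (simp add: divide_less_eq add_nonneg_pos)
      from mult_strict_left_mono[OF this, of "min r d"] show ?thesis
        using \<open>r > 0\<close> \<open>d > 0\<close> by simp
    qed
    finally show ?thesis .
  qed
  have rect: "p + s *\<^sub>R u + t *\<^sub>R v \<in> S" "p + s *\<^sub>R v + t *\<^sub>R u \<in> S"
    if "s \<in> {0..h}" "t \<in> {0..h}" for s t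
    using near[OF that, of u v] near[OF that, of v u] \<open>ball p r \<subseteq> S\<close>
    by (auto simp: dist_commute add.commute)
  obtain s1 t1 where st1: "s1 \<in> {0<..<h}" "t1 \<in> {0<..<h}"
    and 1: "f (p + h *\<^sub>R u + h *\<^sub>R v) - f (p + h *\<^sub>R u) - f (p + h *\<^sub>R v) + f p
             = h * h * dirderiv (\<lambda>y. dirderiv f y u) (p + s1 *\<^sub>R u + t1 *\<^sub>R v) v"
    using mixed_difference_mvt[OF \<open>h > 0\<close> rect(1) diff_f diff_fu] by auto
  obtain s2 t2 where st2: "s2 \<in> {0<..<h}" "t2 \<in> {0<..<h}"
    and 2: "f (p + h *\<^sub>R v + h *\<^sub>R u) - f (p + h *\<^sub>R v) - f (p + h *\<^sub>R u) + f p
             = h * h * dirderiv (\<lambda>y. dirderiv f y v) (p + s2 *\<^sub>R v + t2 *\<^sub>R u) u"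
    using mixed_difference_mvt[OF \<open>h > 0\<close> rect(2) diff_f diff_fv] by (auto simp: add.commute)
  have swap: "p + h *\<^sub>R v + h *\<^sub>R u = p + h *\<^sub>R u + h *\<^sub>R v"
    by (simp add: add_ac)
  have "h * h * dirderiv (\<lambda>y. dirderiv f y u) (p + s1 *\<^sub>R u + t1 *\<^sub>R v) v
      = h * h * dirderiv (\<lambda>y. dirderiv f y v) (p + s2 *\<^sub>R v + t2 *\<^sub>R u) u"
    using 1 2 unfolding swap by linarith
  with \<open>h > 0\<close> have "dirderiv (\<lambda>y. dirderiv f y u) (p + s1 *\<^sub>R u + t1 *\<^sub>R v) v
      = dirderiv (\<lambda>y. dirderiv f y v) (p + s2 *\<^sub>R v + t2 *\<^sub>R u) u"
    by simp
  moreover have "dist (p + s1 *\<^sub>R u + t1 *\<^sub>R v) p < d" "dist (p + s2 *\<^sub>R v + t2 *\<^sub>R u) p < d"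
    using near[of s1 t1 u v] near[of s2 t2 v u] st1 st2 by (auto simp: add.commute)
  ultimately show ?thesis
    by blast
qed

lemma dirderiv_commute:
  fixes f :: "'a::real_normed_vector \<Rightarrow> real"
  assumes "open S" "p \<in> S"
    and diff: "\<And>y. y \<in> S \<Longrightarrow> f differentiable (at y)"
      "\<And>y. y \<in> S \<Longrightarrow> (\<lambda>y. dirderiv f y u) differentiable (at y)"
      "\<And>y. y \<in> S \<Longrightarrow> (\<lambda>y. dirderiv f y v) differentiable (at y)"
    and cont_uv: "continuous (at p) (\<lambda>y. dirderiv (\<lambda>y. dirderiv f y u) y v)"
    and cont_vu: "continuous (at p) (\<lambda>y. dirderiv (\<lambda>y. dirderiv f y v) y u)"
  shows "dirderiv (\<lambda>y. dirderiv f y u) p v = dirderiv (\<lambda>y. dirderiv f y v) p u"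
proof -
  define fuv where "fuv = (\<lambda>y. dirderiv (\<lambda>y. dirderiv f y u) y v)"
  define fvu where "fvu = (\<lambda>y. dirderiv (\<lambda>y. dirderiv f y v) y u)"
  have "\<bar>fuv p - fvu p\<bar> \<le> 2 * e" if "e > 0" for e
  proof -
    obtain d1 where "d1 > 0" and d1: "\<And>y. dist y p < d1 \<Longrightarrow> dist (fuv y) (fuv p) < e"
      using cont_uv \<open>e > 0\<close> unfolding continuous_at_eps_delta fuv_def by blast
    obtain d2 where "d2 > 0" and d2: "\<And>y. dist y p < d2 \<Longrightarrow> dist (fvu y) (fvu p) < e"
      using cont_vu \<open>e > 0\<close> unfolding continuous_at_eps_delta fvu_def by blast
    obtain q1 q2 where "dist q1 p < min d1 d2" "dist q2 p < min d1 d2" "fuv q1 = fvu q2"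
      using mixed_dirderivs_meet_near[OF assms(1,2) _ diff, of "min d1 d2"] \<open>d1 > 0\<close> \<open>d2 > 0\<close>
      unfolding fuv_def fvu_def by auto
    with d1 d2 show ?thesis
      unfolding dist_real_def by fastforce
  qed
  then have "fuv p - fvu p = 0"
    by (intro dense_eq0_I) (metis field_sum_of_halves mult_2 half_gt_zero)
  then show ?thesis
    unfolding fuv_def fvu_def by simp
qed

lemma smooth_on_differentiable_at:
  "smooth_on S f \<Longrightarrow> open S \<Longrightarrow> x \<in> S \<Longrightarrow> f differentiable (at x)"
  unfolding smooth_on_def by (metis Ck_on.simps(2) differentiable_on_eq_differentiable_at)

lemma smooth_on_partial: "smooth_on S f \<Longrightarrow> smooth_on S (\<lambda>x. partial f x i)"
  unfolding smooth_on_def by (metis Ck_on.simps(2))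

lemma partial_commute:
  assumes "open S" "Ck_on 2 S f" "p \<in> S"
  shows "partial (\<lambda>x. partial f x a) p b = partial (\<lambda>x. partial f x b) p a"
  unfolding partial_def
proof (rule dirderiv_commute[OF assms(1,3)])
  have C2: "f differentiable_on S" "\<And>i. (\<lambda>x. partial f x i) differentiable_on S"
    "\<And>i j. continuous_on S (\<lambda>y. partial (\<lambda>x. partial f x i) y j)"
    using assms(2) by (simp_all add: numeral_2_eq_2)
  show "\<And>y. y \<in> S \<Longrightarrow> f differentiable (at y)"
    "\<And>y. y \<in> S \<Longrightarrow> (\<lambda>y. dirderiv f y (axis a 1)) differentiable (at y)"
    "\<And>y. y \<in> S \<Longrightarrow> (\<lambda>y. dirderiv f y (axis b 1)) differentiable (at y)"
    using C2(1,2) \<open>open S\<close> by (auto simp: partial_def differentiable_on_eq_differentiable_at)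
  show "continuous (at p) (\<lambda>y. dirderiv (\<lambda>y. dirderiv f y (axis a 1)) y (axis b 1))"
    "continuous (at p) (\<lambda>y. dirderiv (\<lambda>y. dirderiv f y (axis b 1)) y (axis a 1))"
    using C2(3) assms(1,3) by (auto simp: partial_def continuous_on_eq_continuous_at)
qed

section \<open>Componentwise derivatives and the chain rule\<close>

lemma has_derivative_vec_lambda:
  fixes f :: "'a::euclidean_space \<Rightarrow> 'b::real_normed_vector^'n::finite"
  assumes "\<And>i. ((\<lambda>x. f x $ i) has_derivative f' i) (at x within S)"
  shows "(f has_derivative (\<lambda>h. \<chi> i. f' i h)) (at x within S)"
proof -
  have "linear (f' i)" for i
    using assms has_derivative_linear by blast
  then have "bounded_linear (\<lambda>h. \<chi> i. f' i h)"
    by (auto simp: linear_conv_bounded_linear[symmetric] vec_eq_iff linear_add linear_scale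
        intro!: linearI)
  moreover have "((\<lambda>y. (f y - f x - (\<chi> i. f' i (y - x))) /\<^sub>R norm (y - x)) \<longlongrightarrow> 0) (at x within S)"
    using assms unfolding has_derivative_at_within by (intro vec_tendstoI) simp
  ultimately show ?thesis
    unfolding has_derivative_at_within by blast
qed

lemma differentiable_vec_lambda:
  fixes f :: "'a::euclidean_space \<Rightarrow> 'b::real_normed_vector^'n::finite"
  assumes "\<And>i. (\<lambda>x. f x $ i) differentiable (at x within S)"
  shows "f differentiable (at x within S)"
  using has_derivative_vec_lambda assms unfolding differentiable_def by metis

lemma bounded_linear_matrix_entry: "bounded_linear (\<lambda>P :: 'a::real_normed_vector^'k^'l. P $ i $ j)"
  using bounded_linear_compose[OF bounded_linear_vec_nth bounded_linear_vec_nth] .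

lemma differentiable_prod:
  fixes f :: "'i \<Rightarrow> 'a::real_normed_vector \<Rightarrow> 'b::real_normed_field"
  assumes "\<And>i. i \<in> I \<Longrightarrow> f i differentiable (at x within S)"
  shows "(\<lambda>x. \<Prod>i\<in>I. f i x) differentiable (at x within S)"
proof -
  obtain f' where "\<And>i. i \<in> I \<Longrightarrow> (f i has_derivative f' i) (at x within S)"
    using assms unfolding differentiable_def by metis
  then show ?thesis
    unfolding differentiable_def by (blast intro: has_derivative_prod)
qed

lemma differentiable_compose_fst:
  "f differentiable (at x) \<Longrightarrow> (\<lambda>z. f (fst z)) differentiable (at (x, y))"
  by (rule differentiable_compose[of f fst])
    (simp_all add: bounded_linear_imp_differentiable bounded_linear_fst)

lemma differentiable_compose_snd:
  "f differentiable (at y) \<Longrightarrow> (\<lambda>z. f (snd z)) differentiable (at (x, y))"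
  by (rule differentiable_compose[of f snd])
    (simp_all add: bounded_linear_imp_differentiable bounded_linear_snd)

lemma axis_nth_if: "axis i x $ j = (if j = i then x else 0)"
  by (simp add: axis_def)

lemma dirderiv_Pair_left: "dirderiv f (x, y) (v, 0) = dirderiv (\<lambda>x. f (x, y)) x v"
  by (simp add: dirderiv_def)

lemma dirderiv_Pair_right: "dirderiv f (x, y) (0, w) = dirderiv (\<lambda>y. f (x, y)) y w"
  by (simp add: dirderiv_def)

lemma vec_eq_sum_axis: "(x :: real^'n) = (\<Sum>i\<in>UNIV. x $ i *\<^sub>R axis i 1)"
  using basis_expansion[of x] by (simp add: scalar_mult_eq_scaleR)

lemma matrix_eq_sum_axis: "(K :: real^'m^'n) = (\<Sum>i\<in>UNIV. \<Sum>j\<in>UNIV. K $ i $ j *\<^sub>R axis i (axis j 1))"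
proof -
  have row: "(\<Sum>j\<in>UNIV. K $ i $ j *\<^sub>R axis i (axis j 1) $ a) = (if i = a then K $ a else 0)" for i a
    by (cases "i = a") (simp_all add: axis_def[of i] flip: vec_eq_sum_axis)
  have "(\<Sum>i\<in>UNIV. \<Sum>j\<in>UNIV. K $ i $ j *\<^sub>R axis i (axis j 1)) $ a = K $ a" for a
    by (simp add: row)
  then show ?thesis
    by (simp add: vec_eq_iff[of K])
qed

lemma dirderiv_compose_pair:
  fixes G :: "real^'m::finite \<Rightarrow> real^'k::finite^'l::finite \<Rightarrow> real"
    and X :: "'a::euclidean_space \<Rightarrow> real^'m" and Y :: "'a \<Rightarrow> real^'k^'l"
  assumes G: "(\<lambda>(x, P). G x P) differentiable (at (X \<xi>, Y \<xi>))"
    and X: "\<And>\<mu>. (\<lambda>\<eta>. X \<eta> $ \<mu>) differentiable (at \<xi>)"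
    and Y: "\<And>\<mu> a. (\<lambda>\<eta>. Y \<eta> $ \<mu> $ a) differentiable (at \<xi>)"
  shows "dirderiv (\<lambda>\<eta>. G (X \<eta>) (Y \<eta>)) \<xi> v =
     (\<Sum>\<mu>\<in>UNIV. dirderiv (\<lambda>\<eta>. X \<eta> $ \<mu>) \<xi> v * dirderiv (\<lambda>x. G x (Y \<xi>)) (X \<xi>) (axis \<mu> 1))
   + (\<Sum>\<mu>\<in>UNIV. \<Sum>a\<in>UNIV. dirderiv (\<lambda>\<eta>. Y \<eta> $ \<mu> $ a) \<xi> v
                            * dirderiv (G (X \<xi>)) (Y \<xi>) (axis \<mu> (axis a 1)))"
proof -
  define DG where "DG = dirderiv (\<lambda>(x, P). G x P) (X \<xi>, Y \<xi>)"
  define h where "h = (\<chi> \<mu>. dirderiv (\<lambda>\<eta>. X \<eta> $ \<mu>) \<xi> v)"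
  define K where "K = (\<chi> \<mu> a. dirderiv (\<lambda>\<eta>. Y \<eta> $ \<mu> $ a) \<xi> v)"
  have "(X has_derivative (\<lambda>w. \<chi> \<mu>. dirderiv (\<lambda>\<eta>. X \<eta> $ \<mu>) \<xi> w)) (at \<xi>)"
    "(Y has_derivative (\<lambda>w. \<chi> \<mu> a. dirderiv (\<lambda>\<eta>. Y \<eta> $ \<mu> $ a) \<xi> w)) (at \<xi>)"
    by (intro has_derivative_vec_lambda has_derivative_dirderiv X Y)+
  from has_derivative_compose[OF has_derivative_Pair[OF this] has_derivative_dirderiv[OF G]]
  have "dirderiv (\<lambda>\<eta>. G (X \<eta>) (Y \<eta>)) \<xi> v = DG (h, K)"
    unfolding DG_def h_def K_def by (simp add: has_derivative_imp_dirderiv)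
  also have "(h, K) = (\<Sum>\<mu>\<in>UNIV. h $ \<mu> *\<^sub>R (axis \<mu> 1, 0))
                    + (\<Sum>\<mu>\<in>UNIV. \<Sum>a\<in>UNIV. K $ \<mu> $ a *\<^sub>R (0, axis \<mu> (axis a 1)))"
    using vec_eq_sum_axis[of h] matrix_eq_sum_axis[of K]
    by (simp add: sum_prod fst_sum snd_sum)
  also have "DG \<dots> = (\<Sum>\<mu>\<in>UNIV. h $ \<mu> * DG (axis \<mu> 1, 0))
                   + (\<Sum>\<mu>\<in>UNIV. \<Sum>a\<in>UNIV. K $ \<mu> $ a * DG (0, axis \<mu> (axis a 1)))"
    using linear_dirderiv[OF G] unfolding DG_def[symmetric]
    by (simp only: linear_add linear_sum linear_scale real_scaleR_def)
  finally show ?thesis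
    unfolding DG_def h_def K_def by (simp add: dirderiv_Pair_left dirderiv_Pair_right)
qed

section \<open>The volume density as a function of the Jacobian\<close>

lemma sigma_pt_eq_det: "sigma_pt P m = det (\<chi> i j. P $ m i $ j)"
proof -
  have "sigma_pt P m = (\<Sum>p\<in>UNIV.
      if p permutes UNIV then of_int (sign p) * (\<Prod>i\<in>UNIV. P $ m i $ p i) else 0)"
    unfolding sigma_pt_def levi_civita_def by (intro sum.cong) auto
  then show ?thesis
    unfolding det_def by (simp add: sum.inter_filter[symmetric] Collect_conj_eq[symmetric])
qed

lemma sigma_pt_matrix_mult: "sigma_pt (P ** A) m = det A * sigma_pt P m"
proof -
  have "(\<chi> i j. (P ** A) $ m i $ j) = (\<chi> i j. P $ m i $ j) ** A"
    by (simp add: vec_eq_iff matrix_matrix_mult_def)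
  then show ?thesis
    by (simp add: sigma_pt_eq_det det_mul)
qed

lemma gamma_pt_matrix_mult: "gamma_pt V x (P ** A) = (det A)\<^sup>2 * gamma_pt V x P"
  unfolding gamma_pt_def
  by (simp add: sigma_pt_matrix_mult sum_distrib_left power2_eq_square algebra_simps)

definition sigma_pt_deriv :: "real^'d^'D \<Rightarrow> ('d::finite \<Rightarrow> 'D::finite) \<Rightarrow> real^'d^'D \<Rightarrow> real" where
  "sigma_pt_deriv P m K =
     (\<Sum>p\<in>UNIV. levi_civita p * (\<Sum>i\<in>UNIV. K $ m i $ p i * (\<Prod>j\<in>UNIV - {i}. P $ m j $ p j)))"

definition gamma_pt_deriv :: "(real^'D \<Rightarrow> ('d::finite \<Rightarrow> 'D::finite) \<Rightarrow> ('d \<Rightarrow> 'D) \<Rightarrow> real)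
     \<Rightarrow> real^'D \<Rightarrow> real^'d^'D \<Rightarrow> real^'d^'D \<Rightarrow> real" where
  "gamma_pt_deriv V x P K = (\<Sum>m\<in>UNIV. \<Sum>n\<in>UNIV.
     V x m n * sigma_pt P m * sigma_pt_deriv P n K + V x m n * sigma_pt_deriv P m K * sigma_pt P n)"

lemma has_derivative_sigma_pt:
  "((\<lambda>P. sigma_pt P m) has_derivative sigma_pt_deriv P m) (at P within T)"
  unfolding sigma_pt_def sigma_pt_deriv_def[abs_def]
  by (intro has_derivative_sum has_derivative_mult_right has_derivative_prod
      bounded_linear_imp_has_derivative bounded_linear_matrix_entry)

lemma sigma_pt_differentiable: "(\<lambda>P. sigma_pt P m) differentiable (at P)"
  using has_derivative_sigma_pt unfolding differentiable_def by blast

lemma sigma_pt_deriv_differentiable: "(\<lambda>P. sigma_pt_deriv P m K) differentiable (at P)"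
  unfolding sigma_pt_deriv_def
  by (intro differentiable_sum differentiable_mult differentiable_prod differentiable_const
      bounded_linear_imp_differentiable bounded_linear_matrix_entry ballI) auto

lemma has_derivative_gamma_pt: "(gamma_pt V x has_derivative gamma_pt_deriv V x P) (at P within T)"
  unfolding gamma_pt_def[abs_def] gamma_pt_deriv_def[abs_def]
  by (intro has_derivative_sum has_derivative_mult_right has_derivative_mult
      has_derivative_sigma_pt)

lemma dirderiv_gamma_pt: "dirderiv (gamma_pt V x) P K = gamma_pt_deriv V x P K"
  by (rule has_derivative_imp_dirderiv[OF has_derivative_gamma_pt])

lemma linear_gamma_pt_deriv: "linear (gamma_pt_deriv V x P)"
  using has_derivative_gamma_pt has_derivative_linear by blast

lemma gamma_pt_differentiable:
  assumes "\<And>m n. (\<lambda>x. V x m n) differentiable (at x)"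
  shows "(\<lambda>(x, P). gamma_pt V x P) differentiable (at (x, P))"
  unfolding gamma_pt_def case_prod_beta
  by (intro differentiable_sum differentiable_mult assms ballI sigma_pt_differentiable
      differentiable_compose_fst differentiable_compose_snd) auto

lemma gamma_pt_deriv_differentiable:
  assumes "\<And>m n. (\<lambda>x. V x m n) differentiable (at x)"
  shows "(\<lambda>(x, P). gamma_pt_deriv V x P K) differentiable (at (x, P))"
  unfolding gamma_pt_deriv_def case_prod_beta
  by (intro differentiable_sum differentiable_mult differentiable_add assms ballI
      sigma_pt_differentiable sigma_pt_deriv_differentiable
      differentiable_compose_fst differentiable_compose_snd) auto

lemma det_elementary:
  "det (mat 1 + s *\<^sub>R axis b (axis a 1) :: real^'n::finite^'n) = (if a = b then 1 + s else 1)"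
proof (cases "a = b")
  case True
  let ?E = "mat 1 + s *\<^sub>R axis b (axis a 1) :: real^'n^'n"
  have "det ?E = (\<Prod>i\<in>UNIV. ?E $ i $ i)"
    using True by (intro det_diagonal) (auto simp: mat_def axis_def)
  also have "\<dots> = (\<Prod>i\<in>UNIV. if i = a then 1 + s else 1)"
    using True by (intro prod.cong) (simp_all add: mat_def axis_def)
  finally show ?thesis
    using True by (simp add: prod.delta)
next
  case False
  have "(mat 1 + s *\<^sub>R axis b (axis a 1) :: real^'n^'n)
      = (\<chi> k. if k = b then row b (mat 1) + s *s row a (mat 1) else row k (mat 1))"
    by (auto simp: vec_eq_iff mat_def axis_def row_def)
  then show ?thesis
    using det_row_operation[where i=b and j=a and c=s and A="mat 1 :: real^'n^'n"] False by simp
qed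

lemma gamma_pt_deriv_euler:
  fixes P :: "real^'d::finite^'D::finite"
  shows "(\<Sum>\<alpha>\<in>UNIV. gamma_pt_deriv V x P (axis \<alpha> (axis a 1)) * P $ \<alpha> $ b)
     = (if a = b then 2 * gamma_pt V x P else 0)"
proof -
  define E :: "real^'d^'d" where "E = axis b (axis a 1)"
  have PE: "P ** E = (\<Sum>\<alpha>\<in>UNIV. P $ \<alpha> $ b *\<^sub>R axis \<alpha> (axis a 1))"
    by (simp add: E_def vec_eq_iff matrix_matrix_mult_def axis_nth_if if_distrib[of "\<lambda>v. v $ _"]
        if_distrib[of "\<lambda>r. _ * r"] cong: if_cong)
  have "(\<Sum>\<alpha>\<in>UNIV. gamma_pt_deriv V x P (axis \<alpha> (axis a 1)) * P $ \<alpha> $ b)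
      = gamma_pt_deriv V x P (P ** E)"
    unfolding PE
    by (simp add: linear_sum[OF linear_gamma_pt_deriv] linear_scale[OF linear_gamma_pt_deriv]
        mult.commute)
  also have "\<dots> = deriv (\<lambda>s. gamma_pt V x (P ** (mat 1 + s *\<^sub>R E))) 0"
    by (simp add: dirderiv_def matrix_add_ldistrib matrix_scalar_ac scalar_matrix_assoc
        flip: dirderiv_gamma_pt)
  also have "\<dots> = deriv (\<lambda>s. (if a = b then 1 + s else 1)\<^sup>2 * gamma_pt V x P) 0"
    by (simp add: gamma_pt_matrix_mult det_elementary E_def)
  also have "\<dots> = (if a = b then 2 * gamma_pt V x P else 0)"
    by (intro DERIV_imp_deriv) (auto intro!: derivative_eq_intros)
  finally show ?thesis .
qed

section \<open>The Euler-Lagrange equations along the map\<close>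

(* gamma_v_djac V X alpha a xi is d gamma_v / d(d_a X^alpha), evaluated along X at xi. *)
definition gamma_v_djac :: "(real^'D \<Rightarrow> ('d::finite \<Rightarrow> 'D::finite) \<Rightarrow> ('d \<Rightarrow> 'D) \<Rightarrow> real)
     \<Rightarrow> (real^'d \<Rightarrow> real^'D) \<Rightarrow> 'D \<Rightarrow> 'd \<Rightarrow> real^'d \<Rightarrow> real" where
  "gamma_v_djac V X \<alpha> a \<xi> = gamma_pt_deriv V (X \<xi>) (jac X \<xi>) (axis \<alpha> (axis a 1))"

lemma gamma_v_djac_euler:
  "(\<Sum>\<alpha>\<in>UNIV. gamma_v_djac V X \<alpha> a \<xi> * jac X \<xi> $ \<alpha> $ b)
     = (if a = b then 2 * gamma_v V X \<xi> else 0)"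
  unfolding gamma_v_djac_def gamma_v_def by (rule gamma_pt_deriv_euler)

context
  fixes Sig :: "(real^'d::finite) set"
    and V :: "real^'D::finite \<Rightarrow> ('d \<Rightarrow> 'D) \<Rightarrow> ('d \<Rightarrow> 'D) \<Rightarrow> real"
    and X :: "real^'d \<Rightarrow> real^'D"
  assumes open_Sig: "open Sig"
    and X_smooth: "\<And>\<mu>. smooth_on Sig (\<lambda>\<xi>. X \<xi> $ \<mu>)"
    and V_differentiable: "\<And>\<xi> m n. \<xi> \<in> Sig \<Longrightarrow> (\<lambda>x. V x m n) differentiable (at (X \<xi>))"
begin

lemma jac_entry_smooth: "smooth_on Sig (\<lambda>\<xi>. jac X \<xi> $ \<mu> $ a)"
  unfolding jac_def by (simp add: smooth_on_partial X_smooth)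

lemma partial_jac_commute:
  "\<xi> \<in> Sig \<Longrightarrow> partial (\<lambda>\<eta>. jac X \<eta> $ \<mu> $ a) \<xi> b = partial (\<lambda>\<eta>. jac X \<eta> $ \<mu> $ b) \<xi> a"
  unfolding jac_def using X_smooth open_Sig by (simp add: smooth_on_def partial_commute)

lemma X_entry_differentiable: "\<xi> \<in> Sig \<Longrightarrow> (\<lambda>\<eta>. X \<eta> $ \<mu>) differentiable (at \<xi>)"
  using smooth_on_differentiable_at[OF X_smooth open_Sig] .

lemma jac_entry_differentiable: "\<xi> \<in> Sig \<Longrightarrow> (\<lambda>\<eta>. jac X \<eta> $ \<mu> $ a) differentiable (at \<xi>)"
  using smooth_on_differentiable_at[OF jac_entry_smooth open_Sig] .

lemma X_jac_differentiable: "\<xi> \<in> Sig \<Longrightarrow> (\<lambda>\<eta>. (X \<eta>, jac X \<eta>)) differentiable (at \<xi>)"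
  by (intro differentiable_Pair differentiable_vec_lambda
      X_entry_differentiable jac_entry_differentiable)

lemma gamma_v_differentiable: "\<xi> \<in> Sig \<Longrightarrow> gamma_v V X differentiable (at \<xi>)"
  using differentiable_compose[OF gamma_pt_differentiable[OF V_differentiable] X_jac_differentiable]
  by (simp add: gamma_v_def[abs_def])

lemma gamma_v_djac_differentiable: "\<xi> \<in> Sig \<Longrightarrow> gamma_v_djac V X \<alpha> a differentiable (at \<xi>)"
  using differentiable_compose[OF gamma_pt_deriv_differentiable[OF V_differentiable]
      X_jac_differentiable]
  by (simp add: gamma_v_djac_def[abs_def])

lemma partial_gamma_v:
  assumes "\<xi> \<in> Sig"
  shows "partial (gamma_v V X) \<xi> b =
      (\<Sum>\<alpha>\<in>UNIV. jac X \<xi> $ \<alpha> $ b * dirderiv (\<lambda>x. gamma_pt V x (jac X \<xi>)) (X \<xi>) (axis \<alpha> 1))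
    + (\<Sum>\<alpha>\<in>UNIV. \<Sum>a\<in>UNIV. partial (\<lambda>\<eta>. jac X \<eta> $ \<alpha> $ b) \<xi> a * gamma_v_djac V X \<alpha> a \<xi>)"
proof -
  have "partial (gamma_v V X) \<xi> b =
      (\<Sum>\<alpha>\<in>UNIV. partial (\<lambda>\<eta>. X \<eta> $ \<alpha>) \<xi> b * dirderiv (\<lambda>x. gamma_pt V x (jac X \<xi>)) (X \<xi>) (axis \<alpha> 1))
    + (\<Sum>\<alpha>\<in>UNIV. \<Sum>a\<in>UNIV. partial (\<lambda>\<eta>. jac X \<eta> $ \<alpha> $ a) \<xi> b
                              * dirderiv (gamma_pt V (X \<xi>)) (jac X \<xi>) (axis \<alpha> (axis a 1)))"
    unfolding partial_def gamma_v_def[abs_def] using assms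
    by (intro dirderiv_compose_pair gamma_pt_differentiable V_differentiable X_entry_differentiable
        jac_entry_differentiable)
  then show ?thesis
    using assms
    by (simp add: partial_jac_commute dirderiv_gamma_pt gamma_v_djac_def jac_def[of X \<xi>])
qed

lemma partial_gamma_v_djac_euler:
  assumes "\<xi> \<in> Sig"
  shows "(\<Sum>\<alpha>\<in>UNIV. partial (gamma_v_djac V X \<alpha> a) \<xi> a * jac X \<xi> $ \<alpha> $ b
                   + gamma_v_djac V X \<alpha> a \<xi> * partial (\<lambda>\<eta>. jac X \<eta> $ \<alpha> $ b) \<xi> a)
       = (if a = b then 2 * partial (gamma_v V X) \<xi> a else 0)"
proof -
  have "partial (\<lambda>\<eta>. \<Sum>\<alpha>\<in>UNIV. gamma_v_djac V X \<alpha> a \<eta> * jac X \<eta> $ \<alpha> $ b) \<xi> a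
      = partial (\<lambda>\<eta>. if a = b then 2 * gamma_v V X \<eta> else 0) \<xi> a"
    by (simp only: gamma_v_djac_euler)
  moreover have "partial (\<lambda>\<eta>. \<Sum>\<alpha>\<in>UNIV. gamma_v_djac V X \<alpha> a \<eta> * jac X \<eta> $ \<alpha> $ b) \<xi> a
      = (\<Sum>\<alpha>\<in>UNIV. partial (gamma_v_djac V X \<alpha> a) \<xi> a * jac X \<xi> $ \<alpha> $ b
                   + gamma_v_djac V X \<alpha> a \<xi> * partial (\<lambda>\<eta>. jac X \<eta> $ \<alpha> $ b) \<xi> a)"
    unfolding partial_def using assms
    by (simp add: dirderiv_sum dirderiv_mult gamma_v_djac_differentiable jac_entry_differentiable)
  moreover have "partial (\<lambda>\<eta>. if a = b then 2 * gamma_v V X \<eta> else 0) \<xi> a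
      = (if a = b then 2 * partial (gamma_v V X) \<xi> a else 0)"
    unfolding partial_def using assms
    by (simp add: dirderiv_mult[of "\<lambda>_. 2"] gamma_v_differentiable) (simp add: dirderiv_def)
  ultimately show ?thesis
    by simp
qed

lemma euler_lagrange_expanded:
  assumes "euler_lagrange Sig V F X" and "\<xi> \<in> Sig"
    and pos: "\<forall>\<eta>\<in>Sig. gamma_v V X \<eta> > 0"
    and F': "\<forall>t>0. (F has_real_derivative F' t) (at t)"
    and F'': "\<forall>t>0. (F' has_real_derivative F'' t) (at t)"
  shows "F' (gamma_v V X \<xi>) * dirderiv (\<lambda>x. gamma_pt V x (jac X \<xi>)) (X \<xi>) (axis \<alpha> 1)
       = (\<Sum>a\<in>UNIV. F'' (gamma_v V X \<xi>) * partial (gamma_v V X) \<xi> a * gamma_v_djac V X \<alpha> a \<xi>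
                   + F' (gamma_v V X \<xi>) * partial (gamma_v_djac V X \<alpha> a) \<xi> a)"
proof -
  let ?g = "gamma_v V X"
  have F'_at: "DERIV F (?g \<eta>) :> F' (?g \<eta>)" "DERIV F' (?g \<eta>) :> F'' (?g \<eta>)" if "\<eta> \<in> Sig" for \<eta>
    using that pos F' F'' by auto
  have "\<And>m n. (\<lambda>x. V x m n) differentiable (at (X \<xi>))"
    using V_differentiable \<open>\<xi> \<in> Sig\<close> .
  then have "(\<lambda>x. gamma_pt V x (jac X \<xi>)) differentiable (at (X \<xi>))"
    using differentiable_compose[of "\<lambda>(x, P). gamma_pt V x P" "\<lambda>x. (x, jac X \<xi>)" "X \<xi>"]
      gamma_pt_differentiable[of V] by simp
  then have X_part: "dirderiv (\<lambda>x. lagr V F x (jac X \<xi>)) (X \<xi>) (axis \<alpha> 1)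
      = F' (?g \<xi>) * dirderiv (\<lambda>x. gamma_pt V x (jac X \<xi>)) (X \<xi>) (axis \<alpha> 1)"
    using F'_at(1)[OF \<open>\<xi> \<in> Sig\<close>] unfolding lagr_def gamma_v_def
    by (rule dirderiv_compose_DERIV[rotated])
  have "dirderiv (lagr V F (X \<eta>)) (jac X \<eta>) (axis \<alpha> (axis a 1))
      = F' (?g \<eta>) * gamma_v_djac V X \<alpha> a \<eta>"
    if "\<eta> \<in> Sig" for \<eta> a
    using dirderiv_compose_DERIV[where f="gamma_pt V (X \<eta>)" and x="jac X \<eta>",
        OF F'_at(1)[OF that, unfolded gamma_v_def] differentiableI[OF has_derivative_gamma_pt]]
    by (simp add: lagr_def[abs_def] gamma_v_djac_def gamma_v_def dirderiv_gamma_pt)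
  then have "partial (\<lambda>\<eta>. dirderiv (lagr V F (X \<eta>)) (jac X \<eta>) (axis \<alpha> (axis a 1))) \<xi> a
      = partial (\<lambda>\<eta>. F' (?g \<eta>) * gamma_v_djac V X \<alpha> a \<eta>) \<xi> a" for a
    unfolding partial_def by (intro dirderiv_cong_open[OF open_Sig \<open>\<xi> \<in> Sig\<close>]) simp
  also have "\<dots> a = F'' (?g \<xi>) * partial ?g \<xi> a * gamma_v_djac V X \<alpha> a \<xi>
                   + F' (?g \<xi>) * partial (gamma_v_djac V X \<alpha> a) \<xi> a" for a
  proof -
    have "F' differentiable (at (?g \<xi>))"
      using F'_at(2)[OF \<open>\<xi> \<in> Sig\<close>] unfolding has_field_derivative_def differentiable_def by blast
    then have "(\<lambda>\<eta>. F' (?g \<eta>)) differentiable (at \<xi>)"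
      using differentiable_compose gamma_v_differentiable[OF \<open>\<xi> \<in> Sig\<close>] by blast
    then show ?thesis
      unfolding partial_def using \<open>\<xi> \<in> Sig\<close> F'_at(2)
      by (simp add: dirderiv_mult dirderiv_compose_DERIV gamma_v_differentiable
          gamma_v_djac_differentiable)
  qed
  finally show ?thesis
    using assms(1,2) X_part unfolding euler_lagrange_def by (simp add: eq_diff_eq)
qed

end

section \<open>Contraction with the Jacobian\<close>

(* Intended reading at a point xi: dg = d gamma_v, A alpha = d gamma/d X^alpha,
   J alpha b = d_b X^alpha, W alpha a = d gamma/d(d_a X^alpha), dW alpha a = d_a (W alpha a)
   and H alpha b a = d_a d_b X^alpha. *)
lemma contracted_euler_lagrange_identity:
  fixes \<gamma> dF ddF :: real and dg :: "'d::finite \<Rightarrow> real" and A :: "'D::finite \<Rightarrow> real"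
    and J W dW :: "'D \<Rightarrow> 'd \<Rightarrow> real" and H :: "'D \<Rightarrow> 'd \<Rightarrow> 'd \<Rightarrow> real"
  assumes chain: "dg b = (\<Sum>\<alpha>\<in>UNIV. J \<alpha> b * A \<alpha>) + (\<Sum>\<alpha>\<in>UNIV. \<Sum>a\<in>UNIV. H \<alpha> b a * W \<alpha> a)"
    and el: "\<And>\<alpha>. dF * A \<alpha> = (\<Sum>a\<in>UNIV. ddF * dg a * W \<alpha> a + dF * dW \<alpha> a)"
    and euler: "\<And>a. (\<Sum>\<alpha>\<in>UNIV. W \<alpha> a * J \<alpha> b) = (if a = b then 2 * \<gamma> else 0)"
    and euler_deriv: "\<And>a. (\<Sum>\<alpha>\<in>UNIV. dW \<alpha> a * J \<alpha> b + W \<alpha> a * H \<alpha> b a)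
                              = (if a = b then 2 * dg a else 0)"
  shows "dg b * (2 * \<gamma> * ddF + dF) = 0"
proof -
  define T where "T = (\<Sum>a\<in>UNIV. \<Sum>\<alpha>\<in>UNIV. H \<alpha> b a * W \<alpha> a)"
  have "(\<Sum>\<alpha>\<in>UNIV. J \<alpha> b * (dF * A \<alpha>)) = dF * (dg b - T)"
    using chain sum.swap[of "\<lambda>\<alpha> a. H \<alpha> b a * W \<alpha> a" UNIV UNIV]
    by (simp add: T_def sum_distrib_left mult_ac)
  moreover have "(\<Sum>\<alpha>\<in>UNIV. J \<alpha> b * (dF * A \<alpha>))
      = (\<Sum>\<alpha>\<in>UNIV. \<Sum>a\<in>UNIV. J \<alpha> b * (ddF * dg a * W \<alpha> a + dF * dW \<alpha> a))"
    unfolding el by (simp add: sum_distrib_left)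
  also have "\<dots> = (\<Sum>a\<in>UNIV. \<Sum>\<alpha>\<in>UNIV. J \<alpha> b * (ddF * dg a * W \<alpha> a + dF * dW \<alpha> a))"
    by (rule sum.swap)
  also have "\<dots> = (\<Sum>a\<in>UNIV. ddF * dg a * (\<Sum>\<alpha>\<in>UNIV. W \<alpha> a * J \<alpha> b)
                              + dF * (\<Sum>\<alpha>\<in>UNIV. dW \<alpha> a * J \<alpha> b))"
    by (simp add: sum_distrib_left sum.distrib algebra_simps)
  also have "\<dots> = (\<Sum>a\<in>UNIV. (if a = b then 2 * \<gamma> * ddF * dg b + 2 * dF * dg b else 0)
                              - dF * (\<Sum>\<alpha>\<in>UNIV. H \<alpha> b a * W \<alpha> a))"
  proof (intro sum.cong refl)
    fix a
    have dW: "(\<Sum>\<alpha>\<in>UNIV. dW \<alpha> a * J \<alpha> b)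
        = (if a = b then 2 * dg a else 0) - (\<Sum>\<alpha>\<in>UNIV. H \<alpha> b a * W \<alpha> a)"
      using euler_deriv[of a] by (simp add: sum.distrib mult.commute eq_diff_eq)
    show "ddF * dg a * (\<Sum>\<alpha>\<in>UNIV. W \<alpha> a * J \<alpha> b) + dF * (\<Sum>\<alpha>\<in>UNIV. dW \<alpha> a * J \<alpha> b)
        = (if a = b then 2 * \<gamma> * ddF * dg b + 2 * dF * dg b else 0)
          - dF * (\<Sum>\<alpha>\<in>UNIV. H \<alpha> b a * W \<alpha> a)"
      unfolding euler dW by (simp add: algebra_simps)
  qed
  also have "\<dots> = 2 * \<gamma> * ddF * dg b + 2 * dF * dg b - dF * T"
    by (simp add: T_def sum_subtractf sum_distrib_left)
  ultimately show ?thesis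
    by (simp add: algebra_simps)
qed

theorem mainTheorem3:
  fixes Sig :: "(real^'d) set" and M :: "(real^'D) set"
    and V :: "real^'D \<Rightarrow> ('d::finite \<Rightarrow> 'D::finite) \<Rightarrow> ('d \<Rightarrow> 'D) \<Rightarrow> real"
    and X :: "real^'d \<Rightarrow> real^'D"
    and F F' F'' :: "real \<Rightarrow> real"
  assumes "open Sig" and "open M"
    and "volume_metric M V"
    and "X ` Sig \<subseteq> M"
    and "\<forall>\<mu>. smooth_on Sig (\<lambda>\<xi>. X \<xi> $ \<mu>)"
    and "\<forall>\<xi>\<in>Sig. gamma_v V X \<xi> > 0"
    and "\<forall>t>0. (F has_real_derivative F' t) (at t)"
    and "\<forall>t>0. (F' has_real_derivative F'' t) (at t)"
    and "continuous_on {0<..} F''"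
    and "euler_lagrange Sig V F X"
  shows "\<forall>\<xi>\<in>Sig. \<forall>b. partial (gamma_v V X) \<xi> b *
           (2 * gamma_v V X \<xi> * F'' (gamma_v V X \<xi>) + F' (gamma_v V X \<xi>)) = 0"
proof (intro ballI allI)
  fix \<xi> b assume "\<xi> \<in> Sig"
  have X_smooth: "\<And>\<mu>. smooth_on Sig (\<lambda>\<xi>. X \<xi> $ \<mu>)"
    using assms(5) by blast
  have V_differentiable: "\<And>\<eta> m n. \<eta> \<in> Sig \<Longrightarrow> (\<lambda>x. V x m n) differentiable (at (X \<eta>))"
    using assms(2-4) unfolding volume_metric_def by (blast intro: smooth_on_differentiable_at)
  note regular = assms(1) X_smooth V_differentiable
  show "partial (gamma_v V X) \<xi> b *
      (2 * gamma_v V X \<xi> * F'' (gamma_v V X \<xi>) + F' (gamma_v V X \<xi>)) = 0"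
    by (rule contracted_euler_lagrange_identity[where
          dg = "\<lambda>c. partial (gamma_v V X) \<xi> c" and \<gamma> = "gamma_v V X \<xi>"
          and dF = "F' (gamma_v V X \<xi>)" and ddF = "F'' (gamma_v V X \<xi>)"
          and A = "\<lambda>\<alpha>. dirderiv (\<lambda>x. gamma_pt V x (jac X \<xi>)) (X \<xi>) (axis \<alpha> 1)"
          and J = "\<lambda>\<alpha> c. jac X \<xi> $ \<alpha> $ c" and W = "\<lambda>\<alpha> a. gamma_v_djac V X \<alpha> a \<xi>"
          and dW = "\<lambda>\<alpha> a. partial (gamma_v_djac V X \<alpha> a) \<xi> a"
          and H = "\<lambda>\<alpha> c a. partial (\<lambda>\<eta>. jac X \<eta> $ \<alpha> $ c) \<xi> a",
          OF partial_gamma_v[OF regular \<open>\<xi> \<in> Sig\<close>]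
             euler_lagrange_expanded[OF regular assms(10) \<open>\<xi> \<in> Sig\<close> assms(6-8)]
             gamma_v_djac_euler partial_gamma_v_djac_euler[OF regular \<open>\<xi> \<in> Sig\<close>]])
qed

end
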